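(* Let $n\ge 3$ and let $B_n(r,q)$ be the generic BMW algebra over $\mathbb{K}=\mathbb{Q}(r,q)$ (defined in the context). For all integers $k,h\ge 0$ and all $1\le i\le n-2$, $$Y_i(k)\,Y_{i+1}(k+h)\,Y_i(h)=Y_{i+1}(h)\,Y_i(k+h)\,Y_{i+1}(k),$$ and for all $k,h\ge 0$ and all $1\le i,j\le n-1$ with $|i-j|>1$, $$Y_i(k)Y_j(h)=Y_j(h)Y_i(k).$$
   Context: Let $r,q$ be indeterminates, $\mathbb{K}=\mathbb{Q}(r,q)$, and $x=1+\frac{r-r^{-1}}{q-q^{-1}}$. The generic BMW algebra $B_n(r,q)$ is the unital associative $\mathbb{K}$-algebra generated by $T_i^{\pm1},E_i$ ($1\le i\le n-1$) subject to: $T_i-T_i^{-1}=(q-q^{-1})(1-E_i)$; $E_i^2=xE_i$; $T_iT_{i+1}T_i=T_{i+1}T_iT_{i+1}$ ($1\le i\le n-2$); $T_iT_j=T_jT_i$ ($|i-j|>1$); $E_iE_{i+1}E_i=E_i$, $E_{i+1}E_iE_{i+1}=E_{i+1}$; $T_iT_{i+1}E_i=E_{i+1}E_i$, $T_{i+1}T_iE_{i+1}=E_iE_{i+1}$; $E_iT_i=T_iE_i=r^{-1}E_i$; $E_iT_{i+1}E_i=rE_i$, $E_{i+1}T_iE_{i+1}=rE_{i+1}$ (with $T_i^{\pm1}$ mutually inverse). For an integer $k\ge0$ let $[k]=\frac{q^k-q^{-k}}{q-q^{-1}}$ (so $[0]=0$), and for $1\le i\le n-1$ define $$Y_i(k)=\frac{-1}{[k+1]}\Big([k]T_i-q^k+\frac{q^k-q^{-k}}{1+rq^{-2k+1}}E_i\Big)\in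 B_n(r,q).$$ *)

theory Defs
  imports "HOL-Computational_Algebra.Polynomial" "HOL-Computational_Algebra.Fraction_Field"
begin

text \<open>The base field K = Q(r,q): fractions of the bivariate polynomial ring Q[q][r]
  (outer variable r, inner variable q).\<close>
type_synonym K = "rat poly poly fract"

definition rK :: K where "rK = Fract [:0, 1:] 1"
definition qK :: K where "qK = Fract [:[:0, 1:]:] 1"

definition xK :: K where
  "xK = 1 + (rK - inverse rK) / (qK - inverse qK)"

definition qint :: "nat \<Rightarrow> K" where
  "qint k = (qK ^ k - inverse (qK ^ k)) / (qK - inverse qK)"

text \<open>A K-algebra is a ring A together with a unital ring homomorphism K \<rightarrow> A
  with central image (scalar multiplication c\<cdot>a = \<phi> c * a).\<close>
definition K_algebra_map :: "(K \<Rightarrow> 'a::ring_1) \<Rightarrow> bool" where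
  "K_algebra_map \<phi> \<longleftrightarrow> \<phi> 1 = 1 \<and> (\<forall>a b. \<phi> (a + b) = \<phi> a + \<phi> b)
     \<and> (\<forall>a b. \<phi> (a * b) = \<phi> a * \<phi> b) \<and> (\<forall>a y. \<phi> a * y = y * \<phi> a)"

definition bmw_rels :: "nat \<Rightarrow> (K \<Rightarrow> 'a::ring_1) \<Rightarrow> (nat \<Rightarrow> 'a) \<Rightarrow> (nat \<Rightarrow> 'a) \<Rightarrow> (nat \<Rightarrow> 'a) \<Rightarrow> bool" where
  "bmw_rels n \<phi> T Ti E \<longleftrightarrow>
     (\<forall>i. 1 \<le> i \<and> i \<le> n - 1 \<longrightarrow>
        T i * Ti i = 1 \<and> Ti i * T i = 1
      \<and> T i - Ti i = \<phi> (qK - inverse qK) * (1 - E i)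
      \<and> E i * E i = \<phi> xK * E i
      \<and> E i * T i = \<phi> (inverse rK) * E i
      \<and> T i * E i = \<phi> (inverse rK) * E i)
   \<and> (\<forall>i. 1 \<le> i \<and> i \<le> n - 2 \<longrightarrow>
        T i * T (i+1) * T i = T (i+1) * T i * T (i+1)
      \<and> E i * E (i+1) * E i = E i
      \<and> E (i+1) * E i * E (i+1) = E (i+1)
      \<and> T i * T (i+1) * E i = E (i+1) * E i
      \<and> T (i+1) * T i * E (i+1) = E i * E (i+1)
      \<and> E i * T (i+1) * E i = \<phi> rK * E i
      \<and> E (i+1) * T i * E (i+1) = \<phi> rK * E (i+1))
   \<and> (\<forall>i j. 1 \<le> i \<and> i \<le> n - 1 \<and> 1 \<le> j \<and> j \<le> n - 1 \<and> (i + 1 < j \<or> j + 1 < i) \<longrightarrow>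
        T i * T j = T j * T i)"

definition bmwY :: "(K \<Rightarrow> 'a::ring_1) \<Rightarrow> (nat \<Rightarrow> 'a) \<Rightarrow> (nat \<Rightarrow> 'a) \<Rightarrow> nat \<Rightarrow> nat \<Rightarrow> 'a" where
  "bmwY \<phi> T E i k =
     \<phi> (- 1 / qint (k + 1)) *
       (\<phi> (qint k) * T i - \<phi> (qK ^ k)
        + \<phi> ((qK ^ k - inverse (qK ^ k)) / (1 + rK * qK * inverse (qK ^ (2 * k)))) * E i)"

end

theory Submission
  imports Defs
begin

text \<open>
  Up to a nonzero scalar, Y_i(k) is the Baxterization alpha(U) + beta(U) T_i + gamma(U) E_i
  at U = q^(2k), whose coefficients are polynomials in U. As q^(2(k+h)) = q^(2k) q^(2h), the
  first identity becomes the Yang-Baxter equation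
  Y_i(U) Y_(i+1)(UW) Y_i(W) = Y_(i+1)(W) Y_i(UW) Y_(i+1)(U), which only involves two adjacent
  strands. There the BMW relations rewrite every word in T_i, T_(i+1), E_i, E_(i+1) into a
  combination of fifteen fixed words (a basis of the three-strand BMW algebra), so both sides
  can be expanded and compared coefficientwise in K. Far commutativity holds because
  E_j = 1 - (T_j - T_j^-1) / (q - q^-1) is a polynomial in T_j and T_j^-1.
\<close>

section \<open>The generic parameters\<close>

lemma Fract_power: "Fract a 1 ^ m = Fract (a ^ m) 1"
  by (induction m) (simp_all add: One_fract_def)

lemma qK_power: "qK ^ m = Fract [:monom 1 m:] 1"
  by (simp add: qK_def Fract_power poly_const_pow monom_altdef)

lemma qK_neq_0: "qK \<noteq> 0"
  by (simp add: qK_def Zero_fract_def eq_fract)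

lemma rK_neq_0: "rK \<noteq> 0"
  by (simp add: rK_def Zero_fract_def eq_fract)

lemma qK_power_neq_1: "m > 0 \<Longrightarrow> qK ^ m \<noteq> 1"
  by (simp add: qK_power One_fract_def eq_fract)
    (metis monom_eq_1_iff neq0_conv one_pCons pCons_eq_iff)

lemma qK_power_add_rK_qK_neq_0: "qK ^ m + rK * qK \<noteq> 0"
proof -
  have "qK ^ m + rK * qK = Fract ([:monom 1 m:] + [:0, [:0, 1:]:]) 1"
    unfolding qK_power by (simp add: rK_def qK_def)
  moreover have "coeff ([:monom 1 m:] + [:0, [:0, 1:]:]) 1 \<noteq> (0 :: rat poly)"
    by simp
  ultimately show ?thesis
    by (auto simp: Zero_fract_def eq_fract)
qed

definition zK :: K where "zK = qK - inverse qK"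
definition rinvK :: K where "rinvK = inverse rK"

lemma zK_neq_0: "zK \<noteq> 0"
proof
  assume "zK = 0"
  then have "qK * qK = 1"
    using qK_neq_0 by (simp add: zK_def field_simps)
  then show False
    using qK_power_neq_1[of 2] by (simp add: power2_eq_square)
qed

lemma rinvK_neq_0: "rinvK \<noteq> 0"
  using rK_neq_0 by (simp add: rinvK_def)

lemma qint_Suc_neq_0: "qint (Suc k) \<noteq> 0"
proof
  define Q where "Q = qK ^ Suc k"
  assume "qint (Suc k) = 0"
  then have "Q = inverse Q"
    using zK_neq_0 by (simp add: qint_def Q_def zK_def[symmetric])
  moreover have "Q \<noteq> 0"
    using qK_neq_0 by (simp add: Q_def)
  ultimately have "Q * Q = 1"
    by (metis right_inverse)
  then show False
    using qK_power_neq_1[of "2 * Suc k"] by (simp only: Q_def mult_2 power_add) simp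
qed

lemma parameter_relations:
  "zK * qK = qK ^ 2 - 1" "rinvK * rK = 1" "xK * zK = zK + rK - rinvK"
proof -
  show "zK * qK = qK ^ 2 - 1"
    using qK_neq_0 by (simp add: zK_def algebra_simps power2_eq_square)
  show "rinvK * rK = 1"
    using rK_neq_0 by (simp add: rinvK_def)
  have "xK = 1 + (rK - rinvK) / zK"
    by (simp add: xK_def zK_def rinvK_def)
  then show "xK * zK = zK + rK - rinvK"
    using zK_neq_0 by (simp add: field_simps)
qed

section \<open>Scalars and commuting elements\<close>

locale K_algebra =
  fixes \<phi> :: "K \<Rightarrow> 'a::ring_1"
  assumes K_algebra_map: "K_algebra_map \<phi>"
begin

lemma scalar_add: "\<phi> (c + d) = \<phi> c + \<phi> d"
  and scalar_mult: "\<phi> (c * d) = \<phi> c * \<phi> d"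
  and scalar_one: "\<phi> 1 = 1"
  and scalar_commute: "\<phi> c * x = x * \<phi> c"
  using K_algebra_map unfolding K_algebra_map_def by blast+

lemma scalar_zero: "\<phi> 0 = 0"
  using scalar_add[of 0 0] by simp

lemma scalar_minus: "\<phi> (- c) = - \<phi> c"
  using scalar_add[of c "- c"] by (simp add: scalar_zero add_eq_0_iff)

lemma scalar_diff: "\<phi> (c - d) = \<phi> c - \<phi> d"
  using scalar_add[of c "- d"] by (simp add: scalar_minus)

lemma scalar_mult_assoc: "\<phi> c * (\<phi> d * x) = \<phi> (c * d) * x"
  by (simp add: scalar_mult mult.assoc)

lemma mult_scalar_left_commute: "x * (\<phi> c * y) = \<phi> c * (x * y)"
  by (simp only: mult.assoc[symmetric] scalar_commute[of c x])

lemma scalar_mult_cancel: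
  assumes "c \<noteq> 0" and "\<phi> c * x = \<phi> c * y"
  shows "x = y"
proof -
  have "\<phi> (inverse c * c) * x = \<phi> (inverse c * c) * y"
    using assms(2) by (simp only: scalar_mult_assoc[symmetric])
  then show ?thesis
    using assms(1) by (simp add: scalar_one)
qed

lemma scalar_mult2: "(\<phi> s * x) * (\<phi> t * y) = \<phi> (s * t) * (x * y)"
  by (simp only: mult.assoc mult_scalar_left_commute[of x] scalar_mult_assoc)

lemma scalar_mult3:
  "(\<phi> s * x) * (\<phi> t * y) * (\<phi> u * z) = \<phi> (s * t * u) * (x * y * z)"
  by (simp only: scalar_mult2)

end

definition commute :: "'a::times \<Rightarrow> 'a \<Rightarrow> bool" where
  "commute x y \<longleftrightarrow> x * y = y * x"

lemma commute_sym: "commute x y \<Longrightarrow> commute y x"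
  by (simp add: commute_def)

lemma commute_one_right: "commute (x::'a::monoid_mult) 1"
  by (simp add: commute_def)

lemma commute_add_right: "commute (x::'a::semiring) y \<Longrightarrow> commute x z \<Longrightarrow> commute x (y + z)"
  by (simp add: commute_def algebra_simps)

lemma commute_diff_right: "commute (x::'a::ring) y \<Longrightarrow> commute x z \<Longrightarrow> commute x (y - z)"
  by (simp add: commute_def algebra_simps)

lemma commute_mult_right: "commute (x::'a::semigroup_mult) y \<Longrightarrow> commute x z \<Longrightarrow> commute x (y * z)"
  by (metis commute_def mult.assoc)

lemma commute_inverse_left:
  fixes y :: "'a::monoid_mult"
  assumes "y * y' = 1" "y' * y = 1" "commute y x"
  shows "commute y' x"
proof -
  have "y' * x = y' * (x * y) * y'"
    using assms(1) by (simp add: mult.assoc)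
  also have "\<dots> = (y' * y) * x * y'"
    using assms(3) by (simp add: commute_def mult.assoc)
  also have "\<dots> = x * y'"
    using assms(2) by simp
  finally show ?thesis
    by (simp add: commute_def)
qed

context K_algebra
begin

lemma commute_scalar_right: "commute x (\<phi> c)"
  by (simp add: commute_def scalar_commute)

lemma tangle_from_skein:
  assumes "t - t' = \<phi> zK * (1 - e)"
  shows "e = 1 - \<phi> (inverse zK) * (t - t')"
  using assms zK_neq_0 by (simp add: scalar_mult_assoc scalar_one)

lemma commute_far_generators:
  assumes inv_a: "a * a' = 1" "a' * a = 1" and inv_b: "b * b' = 1" "b' * b = 1"
    and skein_a: "a - a' = \<phi> zK * (1 - e)" and skein_b: "b - b' = \<phi> zK * (1 - f)"
    and "commute a b"
  shows "commute a f" "commute e b" "commute e f"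
proof -
  have "commute a b'"
    using inv_b \<open>commute a b\<close> by (blast intro: commute_sym commute_inverse_left)
  then show "commute a f"
    unfolding tangle_from_skein[OF skein_b]
    by (intro commute_diff_right commute_mult_right commute_one_right commute_scalar_right
        \<open>commute a b\<close>)
  have "commute a' b" "commute a' b'"
    using inv_a \<open>commute a b\<close> \<open>commute a b'\<close> by (blast intro: commute_inverse_left)+
  then have "commute a' f"
    unfolding tangle_from_skein[OF skein_b]
    by (intro commute_diff_right commute_mult_right commute_one_right commute_scalar_right)
  then show "commute e f" "commute e b"
    using \<open>commute a f\<close> \<open>commute a b\<close> \<open>commute a' b\<close>
    unfolding tangle_from_skein[OF skein_a]
    by (auto intro!: commute_sym[of _ e] commute_diff_right commute_mult_right commute_one_right
        commute_scalar_right intro: commute_sym)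
qed

lemma commute_bmwY_right:
  assumes "commute x (T j)" "commute x (E j)"
  shows "commute x (bmwY \<phi> T E j h)"
  unfolding bmwY_def
  by (intro commute_add_right commute_diff_right commute_mult_right commute_scalar_right assms)

end

section \<open>Baxterization\<close>

definition alphaK :: "K \<Rightarrow> K" where "alphaK U = - ((qK ^ 2 - 1) * U * (U + rK * qK))"
definition betaK :: "K \<Rightarrow> K" where "betaK U = qK * (U - 1) * (U + rK * qK)"
definition gammaK :: "K \<Rightarrow> K" where "gammaK U = (qK ^ 2 - 1) * U * (U - 1)"

definition baxter :: "(K \<Rightarrow> 'a::ring_1) \<Rightarrow> 'a \<Rightarrow> 'a \<Rightarrow> K \<Rightarrow> 'a" where
  "baxter \<phi> t e U = \<phi> (alphaK U) + \<phi> (betaK U) * t + \<phi> (gammaK U) * e"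

definition bmwY_scale :: "nat \<Rightarrow> K" where
  "bmwY_scale k = - 1 / (qK * qint (k + 1) * zK * qK ^ k * (qK ^ (2 * k) + rK * qK))"

lemma bmwY_scale_coefficients:
  fixes k :: nat
  defines "s \<equiv> - 1 / qint (k + 1)"
  shows "bmwY_scale k * alphaK (qK ^ (2 * k)) = - (s * qK ^ k)"
    and "bmwY_scale k * betaK (qK ^ (2 * k)) = s * qint k"
    and "bmwY_scale k * gammaK (qK ^ (2 * k))
      = s * ((qK ^ k - inverse (qK ^ k)) / (1 + rK * qK * inverse (qK ^ (2 * k))))"
proof -
  define Q where "Q = qK ^ k"
  define I where "I = qint (k + 1)"
  define W where "W = Q * Q + rK * qK"
  define D where "D = qK * I * zK * Q * W"
  have U: "qK ^ (2 * k) = Q * Q"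
    by (simp add: Q_def mult_2 power_add)
  have "Q \<noteq> 0"
    using qK_neq_0 by (simp add: Q_def)
  moreover have "W \<noteq> 0"
    using qK_power_add_rK_qK_neq_0[of "2 * k"] by (simp add: U W_def)
  moreover have "I \<noteq> 0"
    using qint_Suc_neq_0[of k] by (simp add: I_def)
  ultimately have nonzero: "Q \<noteq> 0" "W \<noteq> 0" "I \<noteq> 0" "D \<noteq> 0"
    using zK_neq_0 qK_neq_0 by (simp_all add: D_def)
  have scale: "bmwY_scale k = - 1 / D"
    by (simp add: bmwY_scale_def D_def I_def Q_def W_def U)
  have s: "s = - 1 / I"
    by (simp add: s_def I_def)
  have qint_k: "qint k = (Q - inverse Q) / zK"
    by (simp add: qint_def Q_def zK_def)
  have q2: "qK ^ 2 - 1 = zK * qK"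
    using parameter_relations(1) by simp
  have cancel: "- 1 / D * (D * X) = - X" for X
    using nonzero by (simp add: field_simps)
  have alpha: "alphaK (qK ^ (2 * k)) = D * (- (Q / I))"
    unfolding alphaK_def U q2 D_def W_def[symmetric] using nonzero by (simp add: field_simps)
  show "bmwY_scale k * alphaK (qK ^ (2 * k)) = - (s * qK ^ k)"
    unfolding scale alpha cancel by (simp add: s Q_def)
  have beta: "betaK (qK ^ (2 * k)) = D * ((Q * Q - 1) / (I * zK * Q))"
    unfolding betaK_def U D_def W_def[symmetric]
    using nonzero zK_neq_0 qK_neq_0 by (simp add: field_simps)
  show "bmwY_scale k * betaK (qK ^ (2 * k)) = s * qint k"
    unfolding scale beta cancel s qint_k using nonzero zK_neq_0 by (simp add: field_simps)
  have gamma: "gammaK (qK ^ (2 * k)) = D * (Q * (Q * Q - 1) / (I * W))"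
    unfolding gammaK_def U q2 D_def using nonzero zK_neq_0 qK_neq_0 by (simp add: field_simps)
  have denominator: "1 + rK * qK * inverse (Q * Q) = W / (Q * Q)"
    unfolding W_def using nonzero by (simp add: field_simps)
  show "bmwY_scale k * gammaK (qK ^ (2 * k))
      = s * ((qK ^ k - inverse (qK ^ k)) / (1 + rK * qK * inverse (qK ^ (2 * k))))"
    unfolding scale gamma cancel s
    unfolding Q_def[symmetric] U denominator
    using nonzero by (simp add: field_simps)
qed

lemma (in K_algebra) bmwY_eq_scaled_baxter:
  "bmwY \<phi> T E i k = \<phi> (bmwY_scale k) * baxter \<phi> (T i) (E i) (qK ^ (2 * k))"
  unfolding bmwY_def baxter_def
  by (simp only: distrib_left right_diff_distrib scalar_mult_assoc scalar_mult[symmetric]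
      bmwY_scale_coefficients scalar_minus) (simp add: algebra_simps)

section \<open>Two adjacent strands\<close>

lemma mult_eq_extend2: "(x::'a::semigroup_mult) * y = u \<Longrightarrow> x * (y * w) = u * w"
  by (simp add: mult.assoc[symmetric])

lemma mult_eq_extend3: "(x::'a::semigroup_mult) * (y * z) = u \<Longrightarrow> x * (y * (z * w)) = u * w"
  by (simp add: mult.assoc[symmetric])

text \<open>The parameters a, a', b, b', e, f play the roles of T_i, T_i^-1, T_(i+1), T_(i+1)^-1,
  E_i, E_(i+1).\<close>

locale bmw_adjacent = K_algebra \<phi> for \<phi> :: "K \<Rightarrow> 'a::ring_1" +
  fixes a a' b b' e f :: 'a
  assumes a_inverse: "a * a' = 1" and b_inverse: "b * b' = 1"
    and a_skein: "a - a' = \<phi> zK * (1 - e)" and b_skein: "b - b' = \<phi> zK * (1 - f)"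
    and e_e: "e * e = \<phi> xK * e" and f_f: "f * f = \<phi> xK * f"
    and e_a: "e * a = \<phi> rinvK * e" and a_e: "a * e = \<phi> rinvK * e"
    and f_b: "f * b = \<phi> rinvK * f" and b_f: "b * f = \<phi> rinvK * f"
    and braid: "a * (b * a) = b * (a * b)"
    and e_f_e: "e * (f * e) = e" and f_e_f: "f * (e * f) = f"
    and a_b_e: "a * (b * e) = f * e" and b_a_f: "b * (a * f) = e * f"
    and e_b_e: "e * (b * e) = \<phi> rK * e" and f_a_f: "f * (a * f) = \<phi> rK * f"
begin

lemmas normalize = mult.assoc distrib_left distrib_right left_diff_distrib right_diff_distrib
  mult_minus_left mult_minus_right mult_1_left mult_1_right mult_zero_left mult_zero_right
  scalar_mult_assoc scalar_mult[symmetric]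
  mult_scalar_left_commute[of a] mult_scalar_left_commute[of b]
  mult_scalar_left_commute[of e] mult_scalar_left_commute[of f]
  scalar_commute[of _ a, symmetric] scalar_commute[of _ b, symmetric]
  scalar_commute[of _ e, symmetric] scalar_commute[of _ f, symmetric]
  add_0_left add_0_right diff_0 diff_0_right minus_minus minus_zero

lemma a_a: "a * a = 1 + \<phi> zK * a - \<phi> (zK * rinvK) * e"
proof -
  have "a * a = a * a' + a * (a - a')"
    by (simp add: algebra_simps)
  also have "\<dots> = 1 + \<phi> zK * a - \<phi> (zK * rinvK) * e"
    by (simp only: a_inverse a_skein normalize a_e) (simp add: algebra_simps)
  finally show ?thesis .
qed

lemma b_b: "b * b = 1 + \<phi> zK * b - \<phi> (zK * rinvK) * f"
proof -
  have "b * b = b * b' + b * (b - b')"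
    by (simp add: algebra_simps)
  also have "\<dots> = 1 + \<phi> zK * b - \<phi> (zK * rinvK) * f"
    by (simp only: b_inverse b_skein normalize b_f) (simp add: algebra_simps)
  finally show ?thesis .
qed

lemma scalar_zK_rinvK_rK: "\<phi> (zK * rinvK) * (\<phi> rK * y) = \<phi> zK * y"
  using parameter_relations(2) by (simp only: scalar_mult_assoc mult.assoc) simp

lemma a_f_e: "a * (f * e) = b * e - \<phi> zK * e + \<phi> zK * (f * e)"
proof -
  have "a * (f * e) = (a * a) * (b * e)"
    by (simp only: a_b_e[symmetric] mult.assoc)
  also have "\<dots> = b * e + \<phi> zK * (a * (b * e)) - \<phi> (zK * rinvK) * (e * (b * e))"
    by (simp only: a_a distrib_right left_diff_distrib mult_1_left mult.assoc)
  also have "\<dots> = b * e + \<phi> zK * (f * e) - \<phi> zK * e"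
    by (simp only: a_b_e e_b_e scalar_zK_rinvK_rK)
  finally show ?thesis
    by (simp add: algebra_simps)
qed

lemma b_e_f: "b * (e * f) = a * f - \<phi> zK * f + \<phi> zK * (e * f)"
proof -
  have "b * (e * f) = (b * b) * (a * f)"
    by (simp only: b_a_f[symmetric] mult.assoc)
  also have "\<dots> = a * f + \<phi> zK * (b * (a * f)) - \<phi> (zK * rinvK) * (f * (a * f))"
    by (simp only: b_b distrib_right left_diff_distrib mult_1_left mult.assoc)
  also have "\<dots> = a * f + \<phi> zK * (e * f) - \<phi> zK * f"
    by (simp only: b_a_f f_a_f scalar_zK_rinvK_rK)
  finally show ?thesis
    by (simp add: algebra_simps)
qed

text \<open>Expand b (b (a b)) with the quadratic relation for b, and also after braiding it into
  (a b a) a; comparing the two leaves only the multiples of f a b and f e.\<close>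

lemma f_a_b: "f * (a * b) = f * e"
proof -
  have "b * (b * (a * b)) = a * b + \<phi> zK * (b * (a * b)) - \<phi> (zK * rinvK) * (f * (a * b))"
    by (simp only: b_b distrib_right left_diff_distrib mult_1_left mult.assoc[symmetric])
  then have "\<phi> (zK * rinvK) * (f * (a * b)) = a * b + \<phi> zK * (a * (b * a)) - b * (a * (b * a))"
    by (simp add: braid algebra_simps)
  also have "b * (a * (b * a)) = (b * (a * b)) * a"
    by (simp only: mult.assoc)
  also have "\<dots> = a * (b * (a * a))"
    by (simp only: braid[symmetric] mult.assoc)
  finally have "\<phi> (zK * rinvK) * (f * (a * b)) = \<phi> (zK * rinvK) * (f * e)"
    by (simp add: a_a normalize a_b_e algebra_simps)
  moreover have "zK * rinvK \<noteq> 0"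
    using zK_neq_0 rinvK_neq_0 by simp
  ultimately show ?thesis
    by (blast intro: scalar_mult_cancel)
qed

lemma e_b_a: "e * (b * a) = e * f"
proof -
  have "(b * (a * b)) * b = b * a + \<phi> zK * (b * (a * b)) - \<phi> (zK * rinvK) * (b * (a * f))"
    by (simp only: mult.assoc b_b distrib_left right_diff_distrib mult_1_right
        mult_scalar_left_commute[of a] mult_scalar_left_commute[of b])
  then have "\<phi> (zK * rinvK) * (e * f) = b * a + \<phi> zK * (a * (b * a)) - (a * (b * a)) * b"
    by (simp add: braid b_a_f algebra_simps)
  also have "(a * (b * a)) * b = a * (b * (a * b))"
    by (simp only: mult.assoc)
  also have "\<dots> = (a * a) * (b * a)"
    by (simp only: braid[symmetric] mult.assoc)
  finally have "\<phi> (zK * rinvK) * (e * (b * a)) = \<phi> (zK * rinvK) * (e * f)"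
    by (simp add: a_a normalize algebra_simps)
  moreover have "zK * rinvK \<noteq> 0"
    using zK_neq_0 rinvK_neq_0 by simp
  ultimately show ?thesis
    by (blast intro: scalar_mult_cancel)
qed

lemma f_e_b: "f * (e * b) = f * a + \<phi> zK * (f * e) - \<phi> zK * f"
proof -
  have "f * (e * b) = (f * (a * b)) * b"
    by (simp only: f_a_b mult.assoc)
  also have "\<dots> = f * (a * (b * b))"
    by (simp only: mult.assoc)
  also have "\<dots> = f * a + \<phi> zK * (f * (a * b)) - \<phi> (zK * rinvK) * (f * (a * f))"
    by (simp only: b_b distrib_left right_diff_distrib mult_1_right
        mult_scalar_left_commute[of a] mult_scalar_left_commute[of f])
  finally show ?thesis
    by (simp only: f_a_b f_a_f scalar_zK_rinvK_rK)
qed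

lemma e_f_a: "e * (f * a) = e * b + \<phi> zK * (e * f) - \<phi> zK * e"
proof -
  have "e * (f * a) = (e * (b * a)) * a"
    by (simp only: e_b_a mult.assoc)
  also have "\<dots> = e * (b * (a * a))"
    by (simp only: mult.assoc)
  also have "\<dots> = e * b + \<phi> zK * (e * (b * a)) - \<phi> (zK * rinvK) * (e * (b * e))"
    by (simp only: a_a distrib_left right_diff_distrib mult_1_right
        mult_scalar_left_commute[of b] mult_scalar_left_commute[of e])
  finally show ?thesis
    by (simp only: e_b_a e_b_e scalar_zK_rinvK_rK)
qed

lemma b_e_b:
  "b * (e * b) = a * (f * a) + \<phi> zK * (e * b) - \<phi> zK * (a * f) - \<phi> zK * (f * a)
    + \<phi> (zK * zK) * f + \<phi> zK * (b * e) - \<phi> (zK * zK) * e"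
proof -
  have "(a * (f * e)) * b = b * (e * b) - \<phi> zK * (e * b) + \<phi> zK * (f * a)
      + \<phi> (zK * zK) * (f * e) - \<phi> (zK * zK) * f"
    by (simp only: a_f_e f_e_b normalize) (simp add: algebra_simps)
  moreover have "a * (f * (e * b)) = a * (f * a) + \<phi> zK * (b * e) - \<phi> (zK * zK) * e
      + \<phi> (zK * zK) * (f * e) - \<phi> zK * (a * f)"
    by (simp only: f_e_b a_f_e normalize) (simp add: algebra_simps)
  ultimately show ?thesis
    by (simp add: mult.assoc algebra_simps)
qed

lemmas two_letter_relations = a_a b_b e_e f_f e_a a_e f_b b_f

lemmas three_letter_relations = braid[symmetric] e_f_e f_e_f a_b_e b_a_f e_b_e f_a_f
  a_f_e b_e_f f_a_b e_b_a f_e_b e_f_a b_e_b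

text \<open>Extending the relations by a right factor lets them rewrite every prefix of a
  right-nested word.\<close>

lemmas word_rewrites = two_letter_relations two_letter_relations[THEN mult_eq_extend2]
  three_letter_relations three_letter_relations[THEN mult_eq_extend3]

text \<open>The fifteen words below form a basis of the three-strand BMW algebra.\<close>

definition word_comb ::
    "K \<Rightarrow> K \<Rightarrow> K \<Rightarrow> K \<Rightarrow> K \<Rightarrow> K \<Rightarrow> K \<Rightarrow> K \<Rightarrow> K \<Rightarrow> K \<Rightarrow> K \<Rightarrow> K
      \<Rightarrow> K \<Rightarrow> K \<Rightarrow> K \<Rightarrow> 'a" where
  "word_comb c0 c1 c2 c3 c4 c5 c6 c7 c8 c9 c10 c11 c12 c13 c14 = \<phi> c0 + \<phi> c1 * a
    + \<phi> c2 * b + \<phi> c3 * e + \<phi> c4 * f + \<phi> c5 * (a * b) + \<phi> c6 * (a * f)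
    + \<phi> c7 * (b * a) + \<phi> c8 * (b * e) + \<phi> c9 * (e * b) + \<phi> c10 * (e * f)
    + \<phi> c11 * (f * a) + \<phi> c12 * (f * e) + \<phi> c13 * (a * (b * a))
    + \<phi> c14 * (a * (f * a))"

lemma word_comb_cong:
  "c0 = d0 \<Longrightarrow> c1 = d1 \<Longrightarrow> c2 = d2 \<Longrightarrow>
    c3 = d3 \<Longrightarrow> c4 = d4 \<Longrightarrow> c5 = d5 \<Longrightarrow>
    c6 = d6 \<Longrightarrow> c7 = d7 \<Longrightarrow> c8 = d8 \<Longrightarrow>
    c9 = d9 \<Longrightarrow> c10 = d10 \<Longrightarrow> c11 = d11 \<Longrightarrow>
    c12 = d12 \<Longrightarrow> c13 = d13 \<Longrightarrow> c14 = d14 \<Longrightarrow>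
    word_comb c0 c1 c2 c3 c4 c5 c6 c7 c8 c9 c10 c11 c12 c13 c14
      = word_comb d0 d1 d2 d3 d4 d5 d6 d7 d8 d9 d10 d11 d12 d13 d14"
  by simp

lemma word_comb_add:
  "word_comb c0 c1 c2 c3 c4 c5 c6 c7 c8 c9 c10 c11 c12 c13 c14
    + word_comb d0 d1 d2 d3 d4 d5 d6 d7 d8 d9 d10 d11 d12 d13 d14
    = word_comb (c0 + d0) (c1 + d1) (c2 + d2) (c3 + d3) (c4 + d4) (c5 + d5) (c6 + d6) (c7 + d7)
      (c8 + d8) (c9 + d9) (c10 + d10) (c11 + d11) (c12 + d12) (c13 + d13) (c14 + d14)"
  by (simp add: word_comb_def scalar_add algebra_simps)

lemma word_comb_diff:
  "word_comb c0 c1 c2 c3 c4 c5 c6 c7 c8 c9 c10 c11 c12 c13 c14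
    - word_comb d0 d1 d2 d3 d4 d5 d6 d7 d8 d9 d10 d11 d12 d13 d14
    = word_comb (c0 - d0) (c1 - d1) (c2 - d2) (c3 - d3) (c4 - d4) (c5 - d5) (c6 - d6) (c7 - d7)
      (c8 - d8) (c9 - d9) (c10 - d10) (c11 - d11) (c12 - d12) (c13 - d13) (c14 - d14)"
  by (simp add: word_comb_def scalar_diff algebra_simps)

lemma word_comb_minus:
  "- word_comb c0 c1 c2 c3 c4 c5 c6 c7 c8 c9 c10 c11 c12 c13 c14
    = word_comb (- c0) (- c1) (- c2) (- c3) (- c4) (- c5) (- c6) (- c7) (- c8) (- c9) (- c10)
      (- c11) (- c12) (- c13) (- c14)"
  by (simp add: word_comb_def scalar_minus algebra_simps)

lemma scalar_mult_word_comb: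
  "\<phi> k * word_comb c0 c1 c2 c3 c4 c5 c6 c7 c8 c9 c10 c11 c12 c13 c14
    = word_comb (k * c0) (k * c1) (k * c2) (k * c3) (k * c4) (k * c5) (k * c6) (k * c7) (k * c8)
      (k * c9) (k * c10) (k * c11) (k * c12) (k * c13) (k * c14)"
  by (simp add: word_comb_def distrib_left scalar_mult_assoc scalar_mult)

lemma scalar_eq_word_comb: "\<phi> k = word_comb k 0 0 0 0 0 0 0 0 0 0 0 0 0 0"
  by (simp add: word_comb_def scalar_zero)

lemma one_eq_word_comb: "1 = word_comb 1 0 0 0 0 0 0 0 0 0 0 0 0 0 0"
  by (simp add: word_comb_def scalar_zero scalar_one)

lemma scalar_word_eq_word_comb:
  "\<phi> k * a = word_comb 0 k 0 0 0 0 0 0 0 0 0 0 0 0 0"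
  "\<phi> k * b = word_comb 0 0 k 0 0 0 0 0 0 0 0 0 0 0 0"
  "\<phi> k * e = word_comb 0 0 0 k 0 0 0 0 0 0 0 0 0 0 0"
  "\<phi> k * f = word_comb 0 0 0 0 k 0 0 0 0 0 0 0 0 0 0"
  "\<phi> k * (a * b) = word_comb 0 0 0 0 0 k 0 0 0 0 0 0 0 0 0"
  "\<phi> k * (a * f) = word_comb 0 0 0 0 0 0 k 0 0 0 0 0 0 0 0"
  "\<phi> k * (b * a) = word_comb 0 0 0 0 0 0 0 k 0 0 0 0 0 0 0"
  "\<phi> k * (b * e) = word_comb 0 0 0 0 0 0 0 0 k 0 0 0 0 0 0"
  "\<phi> k * (e * b) = word_comb 0 0 0 0 0 0 0 0 0 k 0 0 0 0 0"
  "\<phi> k * (e * f) = word_comb 0 0 0 0 0 0 0 0 0 0 k 0 0 0 0"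
  "\<phi> k * (f * a) = word_comb 0 0 0 0 0 0 0 0 0 0 0 k 0 0 0"
  "\<phi> k * (f * e) = word_comb 0 0 0 0 0 0 0 0 0 0 0 0 k 0 0"
  "\<phi> k * (a * (b * a)) = word_comb 0 0 0 0 0 0 0 0 0 0 0 0 0 k 0"
  "\<phi> k * (a * (f * a)) = word_comb 0 0 0 0 0 0 0 0 0 0 0 0 0 0 k"
  by (simp_all add: word_comb_def scalar_zero)

lemma left_mult_word_comb:
  "a * word_comb c0 c1 c2 c3 c4 c5 c6 c7 c8 c9 c10 c11 c12 c13 c14
    = word_comb c1 (c0 + zK * c1) c5
        (- zK * rinvK * c1 + rinvK * c3 - zK * c12 + zK * zK * rinvK * c14) c6 (c2 + zK * c5)
        (c4 + zK * c6) c13 c12 (- zK * rinvK * c5 + rinvK * c9 - zK * rinvK * c14)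
        (- zK * rinvK * c6 + rinvK * c10 - zK * rinvK * c13 - zK * zK * rinvK * c14) c14
        (c8 + zK * c12) (c7 + zK * c13) (c11 + zK * c14)"
  "b * word_comb c0 c1 c2 c3 c4 c5 c6 c7 c8 c9 c10 c11 c12 c13 c14
    = word_comb c2 c7 (c0 + zK * c2) (c8 - zK * zK * c9 - zK * c14)
        (- zK * rinvK * c2 + rinvK * c4 + zK * zK * c9 - zK * c10) c13 (- zK * c9 + c10)
        (c1 + zK * c7) (c3 + zK * c8 + zK * c9) (zK * c9 + c14) (c6 + zK * c10 + zK * c14)
        (- zK * rinvK * c7 - zK * c9 + rinvK * c11)
        (- zK * rinvK * c8 + rinvK * c12 - zK * rinvK * c13) (c5 + zK * c13) c9"
  "e * word_comb c0 c1 c2 c3 c4 c5 c6 c7 c8 c9 c10 c11 c12 c13 c14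
    = word_comb 0 0 0 (c0 + rinvK * c1 + xK * c3 + rK * c8 - zK * c11 + c12 - zK * rinvK * c14)
        0 0 0 0 0 (c2 + rinvK * c5 + xK * c9 + c11 + rinvK * c14)
        (c4 + rinvK * c6 + c7 + xK * c10 + zK * c11 + rinvK * c13 + zK * rinvK * c14) 0 0 0 0"
  "f * word_comb c0 c1 c2 c3 c4 c5 c6 c7 c8 c9 c10 c11 c12 c13 c14
    = word_comb 0 0 0 0 (c0 + rinvK * c2 + xK * c4 + rK * c6 - zK * c9 + c10) 0 0 0 0 0 0
        (c1 + rinvK * c7 + c9 + xK * c11 + rK * c14)
        (c3 + c5 + rinvK * c8 + zK * c9 + xK * c12 + rinvK * c13) 0 0"
  unfolding word_comb_def
  apply (simp_all only: normalize word_rewrites)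
  apply (simp_all only: scalar_word_eq_word_comb)
  apply (simp_all only: scalar_eq_word_comb)
  apply (simp_all only: word_comb_add word_comb_diff word_comb_minus)
  apply (rule word_comb_cong; simp add: algebra_simps)+
  done

lemma yang_baxter:
  "baxter \<phi> a e U * baxter \<phi> b f (U * W) * baxter \<phi> a e W
    = baxter \<phi> b f W * baxter \<phi> a e (U * W) * baxter \<phi> b f U"
proof -
  obtain zi where zi: "zK * zi = 1"
    using zK_neq_0 right_inverse by blast
  have "baxter \<phi> a e U * (baxter \<phi> b f (U * W)
        * (baxter \<phi> a e W * word_comb 1 0 0 0 0 0 0 0 0 0 0 0 0 0 0))
      = baxter \<phi> b f W * (baxter \<phi> a e (U * W)
        * (baxter \<phi> b f U * word_comb 1 0 0 0 0 0 0 0 0 0 0 0 0 0 0))"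
    unfolding baxter_def
    apply (simp only: distrib_right mult.assoc left_mult_word_comb scalar_mult_word_comb
        word_comb_add)
    apply (rule word_comb_cong; unfold alphaK_def betaK_def gammaK_def)
    \<comment> \<open>Some coefficient identities hold only modulo the relations between the parameters.\<close>
    apply (algebra | use parameter_relations zi in algebra)+
    done
  then show ?thesis
    by (simp only: one_eq_word_comb[symmetric] mult_1_right mult.assoc)
qed

end

section \<open>The relations for Y\<close>

context K_algebra
begin

lemma bmw_adjacent_generators:
  assumes rels: "bmw_rels n \<phi> T Ti E" and "1 \<le> i" "i \<le> n - 2"
  shows "bmw_adjacent \<phi> (T i) (Ti i) (T (i + 1)) (Ti (i + 1)) (E i) (E (i + 1))"
proof -
  have generator: "T j * Ti j = 1 \<and> T j - Ti j = \<phi> zK * (1 - E j) \<and> E j * E j = \<phi> xK * E j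
      \<and> E j * T j = \<phi> rinvK * E j \<and> T j * E j = \<phi> rinvK * E j"
    if "1 \<le> j" "j \<le> n - 1" for j
    using rels that unfolding bmw_rels_def zK_def rinvK_def by blast
  have "T i * T (i+1) * T i = T (i+1) * T i * T (i+1)
      \<and> E i * E (i+1) * E i = E i \<and> E (i+1) * E i * E (i+1) = E (i+1)
      \<and> T i * T (i+1) * E i = E (i+1) * E i \<and> T (i+1) * T i * E (i+1) = E i * E (i+1)
      \<and> E i * T (i+1) * E i = \<phi> rK * E i \<and> E (i+1) * T i * E (i+1) = \<phi> rK * E (i+1)"
    using rels \<open>1 \<le> i\<close> \<open>i \<le> n - 2\<close> unfolding bmw_rels_def by blast
  then show ?thesis
    using generator[of i] generator[of "i + 1"] \<open>1 \<le> i\<close> \<open>i \<le> n - 2\<close>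
    unfolding bmw_adjacent_def bmw_adjacent_axioms_def
    by (simp add: K_algebra_axioms mult.assoc)
qed

lemma bmwY_braid_relation:
  assumes "bmw_rels n \<phi> T Ti E" and "1 \<le> i" "i \<le> n - 2"
  shows "bmwY \<phi> T E i k * bmwY \<phi> T E (i + 1) (k + h) * bmwY \<phi> T E i h
    = bmwY \<phi> T E (i + 1) h * bmwY \<phi> T E i (k + h) * bmwY \<phi> T E (i + 1) k"
proof -
  interpret bmw_adjacent \<phi> "T i" "Ti i" "T (i + 1)" "Ti (i + 1)" "E i" "E (i + 1)"
    using bmw_adjacent_generators assms by blast
  have "qK ^ (2 * (k + h)) = qK ^ (2 * k) * qK ^ (2 * h)"
    by (simp add: power_add)
  moreover have "bmwY_scale k * bmwY_scale (k + h) * bmwY_scale h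
      = bmwY_scale h * bmwY_scale (k + h) * bmwY_scale k"
    by (simp only: mult_ac)
  ultimately show ?thesis
    by (simp only: bmwY_eq_scaled_baxter scalar_mult3 yang_baxter)
qed

lemma bmwY_far_commute:
  assumes rels: "bmw_rels n \<phi> T Ti E"
    and "1 \<le> i" "i \<le> n - 1" "1 \<le> j" "j \<le> n - 1" "i + 1 < j \<or> j + 1 < i"
  shows "bmwY \<phi> T E i k * bmwY \<phi> T E j h = bmwY \<phi> T E j h * bmwY \<phi> T E i k"
proof -
  have generator: "T l * Ti l = 1 \<and> Ti l * T l = 1 \<and> T l - Ti l = \<phi> zK * (1 - E l)"
    if "1 \<le> l" "l \<le> n - 1" for l
    using rels that unfolding bmw_rels_def zK_def by blast
  have "commute (T i) (T j)"
    using rels assms(2-) unfolding bmw_rels_def commute_def by blast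
  with generator[of i] generator[of j] assms(2-5)
  have "commute (T i) (E j)" "commute (E i) (T j)" "commute (E i) (E j)"
    using commute_far_generators by blast+
  then have "commute (bmwY \<phi> T E j h) (bmwY \<phi> T E i k)"
    using \<open>commute (T i) (T j)\<close> by (blast intro: commute_sym commute_bmwY_right)
  then show ?thesis
    by (simp add: commute_def)
qed

end

theorem proposition3p2:
  fixes n :: nat and \<phi> :: "K \<Rightarrow> 'a::ring_1" and T Ti E :: "nat \<Rightarrow> 'a"
  assumes "n \<ge> 3"
    and "K_algebra_map \<phi>"
    and "bmw_rels n \<phi> T Ti E"
  shows "(\<forall>k h i. 1 \<le> i \<and> i \<le> n - 2 \<longrightarrow>
            bmwY \<phi> T E i k * bmwY \<phi> T E (i+1) (k+h) * bmwY \<phi> T E i h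
          = bmwY \<phi> T E (i+1) h * bmwY \<phi> T E i (k+h) * bmwY \<phi> T E (i+1) k)
       \<and> (\<forall>k h i j. 1 \<le> i \<and> i \<le> n - 1 \<and> 1 \<le> j \<and> j \<le> n - 1 \<and> (i + 1 < j \<or> j + 1 < i) \<longrightarrow>
            bmwY \<phi> T E i k * bmwY \<phi> T E j h = bmwY \<phi> T E j h * bmwY \<phi> T E i k)"
proof -
  interpret K_algebra \<phi>
    using assms(2) by unfold_locales
  show ?thesis
    using bmwY_braid_relation[OF assms(3)] bmwY_far_commute[OF assms(3)] by blast
qed

end
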